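(* Let $N=\{1,\ldots,n\}$, $\mathcal{X}=\{-1,1\}^n$, and let $P\subseteq\Delta(\mathcal{X})$ be a closed convex set with set of extreme points $\mathrm{ext}(P)$. Then: (1) A deterministic voting rule $\phi$ is $P$-robust if and only if there exists a nonzero $w\in\mathbb{R}_+^n$ such that $\dfrac{\sum_i w_ir_i(\phi,p)}{\sum_iw_i}>\dfrac12$ for all $p\in\mathrm{ext}(P)$. (2) A deterministic voting rule $\phi$ is weakly $P$-robust if and only if there exists a nonzero $w\in\mathbb{R}_+^n$ such that $\dfrac{\sum_i w_ir_i(\phi,p)}{\sum_iw_i}\geq\dfrac12$ for all $p\in\mathrm{ext}(P)$.
   Context: A deterministic voting rule is a map $\phi:\mathcal{X}\to\{-1,1\}$; $\Delta(\mathcal{X})$ is the simplex of probability distributions on $\mathcal{X}$. Responsiveness: $r_i(\phi,p)=p(\{x:\phi(x)=x_i\})$. $\phi$ is $P$-robust if for every $p\in P$ some $i\in N$ has $r_i(\phi,p)>1/2$; weakly $P$-robust if for every $p\in P$ some $i\in N$ has $r_i(\phi,p)\geq1/2$. *)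

theory Defs
  imports "HOL-Analysis.Analysis"
begin

datatype vote = Minus | Plus

instance vote :: finite
proof
  have "UNIV = {Minus, Plus}" by (auto intro: vote.exhaust)
  then show "finite (UNIV :: vote set)" by (metis finite.emptyI finite.insertI)
qed

text \<open>Voters are the elements of a finite type 'n (so n = CARD('n));
  profiles X = {-1,1}^n are functions 'n => vote; a distribution on X is a
  vector in real^('n => vote).\<close>

definition prob_simplex :: "(real ^ ('n::finite \<Rightarrow> vote)) set" where
  "prob_simplex = {p. (\<forall>x. p $ x \<ge> 0) \<and> (\<Sum>x\<in>UNIV. p $ x) = 1}"

definition resp :: "(('n::finite \<Rightarrow> vote) \<Rightarrow> vote) \<Rightarrow> real ^ ('n \<Rightarrow> vote) \<Rightarrow> 'n \<Rightarrow> real" where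
  "resp \<phi> p i = (\<Sum>x\<in>{x. \<phi> x = x i}. p $ x)"

definition robust :: "(('n::finite \<Rightarrow> vote) \<Rightarrow> vote) \<Rightarrow> (real ^ ('n \<Rightarrow> vote)) set \<Rightarrow> bool" where
  "robust \<phi> P \<longleftrightarrow> (\<forall>p\<in>P. \<exists>i. resp \<phi> p i > 1/2)"

definition weakly_robust :: "(('n::finite \<Rightarrow> vote) \<Rightarrow> vote) \<Rightarrow> (real ^ ('n \<Rightarrow> vote)) set \<Rightarrow> bool" where
  "weakly_robust \<phi> P \<longleftrightarrow> (\<forall>p\<in>P. \<exists>i. resp \<phi> p i \<ge> 1/2)"

end

theory Submission
  imports Defs
begin

text \<open>The responsiveness vector \<open>r(\<phi>, p)\<close> is linear in \<open>p\<close>, so it maps the compact convex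
  set \<open>P\<close> onto a compact convex set \<open>R \<subseteq> \<real>\<^sup>n\<close>. Robustness says that \<open>R\<close> misses the closed
  orthant \<open>{y. \<forall>i. y\<^sub>i \<le> 1/2}\<close> (weak robustness: the open one). A hyperplane separating \<open>R\<close>
  from that orthant has a nonnegative normal \<open>w\<close>, because the orthant is unbounded below in
  every coordinate, and at the corner \<open>(1/2, \<dots>, 1/2)\<close> the functional takes half the total
  weight \<open>\<Sum>\<^sub>i w\<^sub>i\<close>; conversely, such a \<open>w\<close> forces some coordinate of every point of \<open>R\<close>
  above \<open>1/2\<close>. By Krein-Milman, a linear inequality holds on \<open>P\<close> as soon as it holds at the
  extreme points of \<open>P\<close>.\<close>

definition resp_vector :: "(('n::finite \<Rightarrow> vote) \<Rightarrow> vote) \<Rightarrow> real ^ ('n \<Rightarrow> vote) \<Rightarrow> real ^ 'n" where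
  "resp_vector \<phi> p = (\<chi> i. resp \<phi> p i)"

lemma resp_add: "resp \<phi> (p + q) i = resp \<phi> p i + resp \<phi> q i"
  unfolding resp_def by (simp add: sum.distrib)

lemma resp_scaleR: "resp \<phi> (c *\<^sub>R p) i = c * resp \<phi> p i"
  unfolding resp_def by (simp add: sum_distrib_left)

lemma linear_resp_vector: "linear (resp_vector \<phi>)"
  by (rule linearI) (simp_all add: resp_vector_def resp_add resp_scaleR vec_eq_iff)

lemma linear_weighted_resp: "linear (\<lambda>p. \<Sum>i\<in>UNIV. w i * resp \<phi> p i)"
  by (rule linearI)
    (simp_all add: resp_add resp_scaleR distrib_left sum.distrib sum_distrib_left mult.left_commute)

lemma bounded_prob_simplex: "bounded (prob_simplex :: (real ^ ('n::finite \<Rightarrow> vote)) set)"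
proof -
  have "prob_simplex \<subseteq> cbox (0 :: real ^ ('n \<Rightarrow> vote)) (\<chi> _. 1)"
  proof
    fix p :: "real ^ ('n \<Rightarrow> vote)"
    assume "p \<in> prob_simplex"
    then have nonneg: "\<forall>x. 0 \<le> p $ x" and total: "(\<Sum>x\<in>UNIV. p $ x) = 1"
      by (auto simp: prob_simplex_def)
    have "p $ x \<le> 1" for x
      using member_le_sum[of x UNIV "\<lambda>x. p $ x"] nonneg total by auto
    with nonneg show "p \<in> cbox 0 (\<chi> _. 1)"
      by (simp add: mem_box_cart)
  qed
  then show ?thesis
    using bounded_cbox bounded_subset by blast
qed

lemma ball_extreme_points_iff_linear:
  fixes S :: "'a::euclidean_space set" and f :: "'a \<Rightarrow> 'b::real_vector"
  assumes "compact S" and "convex S" and "linear f" and "convex I"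
  shows "(\<forall>x\<in>S. f x \<in> I) \<longleftrightarrow> (\<forall>x. x extreme_point_of S \<longrightarrow> f x \<in> I)"
proof
  show "\<forall>x\<in>S. f x \<in> I \<Longrightarrow> \<forall>x. x extreme_point_of S \<longrightarrow> f x \<in> I"
    by (auto simp: extreme_point_of_def)
next
  assume "\<forall>x. x extreme_point_of S \<longrightarrow> f x \<in> I"
  then have "convex hull {x. x extreme_point_of S} \<subseteq> f -` I"
    using convex_linear_vimage[OF assms(3,4)] by (intro hull_minimal) auto
  then show "\<forall>x\<in>S. f x \<in> I"
    using Krein_Milman_Minkowski[OF assms(1,2)] by auto
qed

lemma inner_const_vec: "(a :: real ^ 'n) \<bullet> (\<chi> _. c) = c * (\<Sum>i\<in>UNIV. a $ i)"
  by (simp add: inner_vec_def sum_distrib_left mult.commute)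

lemma nonneg_if_bounded_above_on_lower_orthant:
  fixes a :: "real ^ 'n"
  assumes bounded: "\<forall>x. (\<forall>j. x $ j < c) \<longrightarrow> a \<bullet> x \<le> b"
  shows "0 \<le> a $ i"
proof (rule ccontr)
  assume "\<not> 0 \<le> a $ i"
  then have neg: "a $ i < 0" by simp
  define h :: "real ^ 'n" where "h = (\<chi> _. c - 1)"
  define s where "s = max 0 ((b - a \<bullet> h + 1) / - a $ i)"
  have "s * - a $ i \<ge> b - a \<bullet> h + 1"
    using neg by (simp add: s_def pos_divide_le_eq max_mult_distrib_right)
  then have "a \<bullet> (h - s *\<^sub>R axis i 1) > b"
    by (simp add: inner_diff_right inner_axis)
  moreover have "\<forall>j. (h - s *\<^sub>R axis i 1) $ j < c"
    by (simp add: h_def s_def axis_def)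
  ultimately show False
    using bounded by fastforce
qed

lemma ex_component_gt_if_weighted_sum_gt:
  fixes w y :: "'n::finite \<Rightarrow> real"
  assumes "\<forall>i. 0 \<le> w i" and "c * (\<Sum>i\<in>UNIV. w i) < (\<Sum>i\<in>UNIV. w i * y i)"
  shows "\<exists>i. c < y i"
proof (rule ccontr)
  assume "\<not> (\<exists>i. c < y i)"
  then have "(\<Sum>i\<in>UNIV. w i * y i) \<le> (\<Sum>i\<in>UNIV. w i * c)"
    using assms(1) by (intro sum_mono mult_left_mono) (auto simp: not_less)
  with assms(2) show False
    by (simp add: sum_distrib_left mult.commute)
qed

lemma ex_component_ge_if_weighted_sum_ge:
  fixes w y :: "'n::finite \<Rightarrow> real"
  assumes "\<forall>i. 0 \<le> w i" and "w j \<noteq> 0" and "c * (\<Sum>i\<in>UNIV. w i) \<le> (\<Sum>i\<in>UNIV. w i * y i)"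
  shows "\<exists>i. c \<le> y i"
proof (rule ccontr)
  assume "\<not> (\<exists>i. c \<le> y i)"
  then have below: "y i < c" for i
    by (simp add: not_le)
  have "w j > 0"
    using assms(1,2) by (simp add: less_le)
  then have "(\<Sum>i\<in>UNIV. w i * y i) < (\<Sum>i\<in>UNIV. w i * c)"
    using assms(1) below
    by (intro sum_strict_mono_ex1) (auto intro: mult_left_mono less_imp_le mult_strict_left_mono)
  with assms(3) show False
    by (simp add: sum_distrib_left mult.commute)
qed

lemma ex_component_gt_iff_weighted_sum_gt:
  fixes T :: "(real ^ 'n) set"
  assumes "compact T" and "convex T"
  shows "(\<forall>y\<in>T. \<exists>i. c < y $ i) \<longleftrightarrow>
    (\<exists>w. (\<forall>i. 0 \<le> w i) \<and> (\<exists>i. w i \<noteq> 0) \<and>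
      (\<forall>y\<in>T. c * (\<Sum>i\<in>UNIV. w i) < (\<Sum>i\<in>UNIV. w i * y $ i)))"
proof
  show "\<exists>w. (\<forall>i. 0 \<le> w i) \<and> (\<exists>i. w i \<noteq> 0) \<and>
      (\<forall>y\<in>T. c * (\<Sum>i\<in>UNIV. w i) < (\<Sum>i\<in>UNIV. w i * y $ i)) \<Longrightarrow> \<forall>y\<in>T. \<exists>i. c < y $ i"
    using ex_component_gt_if_weighted_sum_gt by blast
next
  assume avoids: "\<forall>y\<in>T. \<exists>i. c < y $ i"
  show "\<exists>w. (\<forall>i. 0 \<le> w i) \<and> (\<exists>i. w i \<noteq> 0) \<and>
      (\<forall>y\<in>T. c * (\<Sum>i\<in>UNIV. w i) < (\<Sum>i\<in>UNIV. w i * y $ i))"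
  proof (cases "T = {}")
    case True
    then show ?thesis
      by (intro exI[of _ "\<lambda>_. 1"]) auto
  next
    case False
    define S where "S = {x :: real ^ 'n. \<forall>i. x $ i \<le> c}"
    have "closed S"
      unfolding S_def by (intro closed_Collect_all closed_halfspace_component_le_cart)
    moreover have "convex S"
      unfolding S_def by (rule convex_box_cart) (simp flip: atMost_def)
    moreover have "S \<inter> T = {}"
      using avoids by (force simp: S_def not_less[symmetric])
    ultimately obtain a b where below: "\<forall>x\<in>S. a \<bullet> x < b" and above: "\<forall>y\<in>T. b < a \<bullet> y"
      using separating_hyperplane_closed_compact assms False by metis
    have nonneg: "0 \<le> a $ i" for i
      using below
      by (intro nonneg_if_bounded_above_on_lower_orthant[where c = c and b = b])
        (auto simp: S_def intro: less_imp_le)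
    have "(\<chi> _. c) \<in> S"
      by (simp add: S_def)
    then have sep: "c * (\<Sum>i\<in>UNIV. a $ i) < a \<bullet> y" if "y \<in> T" for y
      using below above that by (fastforce simp flip: inner_const_vec)
    from False obtain y where "y \<in> T" by blast
    with sep have "a \<noteq> 0" by fastforce
    with nonneg sep show ?thesis
      by (intro exI[of _ "\<lambda>i. a $ i"]) (auto simp: vec_eq_iff inner_vec_def)
  qed
qed

lemma ex_component_ge_iff_weighted_sum_ge:
  fixes T :: "(real ^ 'n) set"
  assumes "convex T"
  shows "(\<forall>y\<in>T. \<exists>i. c \<le> y $ i) \<longleftrightarrow>
    (\<exists>w. (\<forall>i. 0 \<le> w i) \<and> (\<exists>i. w i \<noteq> 0) \<and>
      (\<forall>y\<in>T. c * (\<Sum>i\<in>UNIV. w i) \<le> (\<Sum>i\<in>UNIV. w i * y $ i)))"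
proof
  show "\<exists>w. (\<forall>i. 0 \<le> w i) \<and> (\<exists>i. w i \<noteq> 0) \<and>
      (\<forall>y\<in>T. c * (\<Sum>i\<in>UNIV. w i) \<le> (\<Sum>i\<in>UNIV. w i * y $ i)) \<Longrightarrow> \<forall>y\<in>T. \<exists>i. c \<le> y $ i"
    using ex_component_ge_if_weighted_sum_ge by blast
next
  assume avoids: "\<forall>y\<in>T. \<exists>i. c \<le> y $ i"
  show "\<exists>w. (\<forall>i. 0 \<le> w i) \<and> (\<exists>i. w i \<noteq> 0) \<and>
      (\<forall>y\<in>T. c * (\<Sum>i\<in>UNIV. w i) \<le> (\<Sum>i\<in>UNIV. w i * y $ i))"
  proof (cases "T = {}")
    case True
    then show ?thesis
      by (intro exI[of _ "\<lambda>_. 1"]) auto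
  next
    case False
    define S where "S = {x :: real ^ 'n. \<forall>i. x $ i < c}"
    have "convex S"
      unfolding S_def by (rule convex_box_cart) (simp flip: lessThan_def)
    moreover have "(\<chi> _. c - 1) \<in> S"
      by (simp add: S_def)
    moreover have "S \<inter> T = {}"
      using avoids by (force simp: S_def not_le[symmetric])
    ultimately obtain a b where "a \<noteq> 0"
      and below: "\<forall>x\<in>S. a \<bullet> x \<le> b" and above: "\<forall>y\<in>T. b \<le> a \<bullet> y"
      using separating_hyperplane_sets assms False by (metis empty_iff)
    have nonneg: "0 \<le> a $ i" for i
      using below by (intro nonneg_if_bounded_above_on_lower_orthant) (simp add: S_def)
    \<comment> \<open>\<open>S\<close> is open, so the bound \<open>a \<bullet> x \<le> b\<close> reaches its corner \<open>\<chi> _. c\<close> only in the limit.\<close>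
    have corner: "(c - e) * (\<Sum>i\<in>UNIV. a $ i) \<le> b" if "0 < e" for e
      using below that by (force simp: S_def simp flip: inner_const_vec)
    have "c * (\<Sum>i\<in>UNIV. a $ i) \<le> b"
    proof (rule field_le_epsilon)
      fix e :: real
      assume "0 < e"
      have "0 \<le> (\<Sum>i\<in>UNIV. a $ i)"
        using nonneg by (simp add: sum_nonneg)
      with \<open>0 < e\<close> have "e / ((\<Sum>i\<in>UNIV. a $ i) + 1) * (\<Sum>i\<in>UNIV. a $ i) \<le> e"
        by (simp add: field_simps)
      moreover have "(c - e / ((\<Sum>i\<in>UNIV. a $ i) + 1)) * (\<Sum>i\<in>UNIV. a $ i) \<le> b"
        using \<open>0 < e\<close> \<open>0 \<le> (\<Sum>i\<in>UNIV. a $ i)\<close> by (intro corner) simp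
      ultimately show "c * (\<Sum>i\<in>UNIV. a $ i) \<le> b + e"
        by (simp add: algebra_simps)
    qed
    with \<open>a \<noteq> 0\<close> nonneg above show ?thesis
      by (intro exI[of _ "\<lambda>i. a $ i"]) (force simp: vec_eq_iff inner_vec_def)
  qed
qed

lemma ex_nonzero_imp_sum_pos:
  fixes w :: "'n::finite \<Rightarrow> real"
  assumes "\<forall>i. 0 \<le> w i" and "\<exists>i. w i \<noteq> 0"
  shows "0 < (\<Sum>i\<in>UNIV. w i)"
proof -
  from assms obtain j where "0 < w j"
    by (auto simp: less_le)
  with assms(1) show ?thesis
    by (intro sum_pos2[of UNIV j]) auto
qed

lemma robust_iff_weighted_resp_on_extreme_points:
  fixes P :: "(real ^ ('n::finite \<Rightarrow> vote)) set"
  assumes "compact P" and "convex P"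
  shows "robust \<phi> P \<longleftrightarrow>
    (\<exists>w :: 'n \<Rightarrow> real. (\<forall>i. w i \<ge> 0) \<and> (\<exists>i. w i \<noteq> 0) \<and>
      (\<forall>p. p extreme_point_of P \<longrightarrow>
        (\<Sum>i\<in>UNIV. w i * resp \<phi> p i) / (\<Sum>i\<in>UNIV. w i) > 1/2))"
proof -
  have compact: "compact (resp_vector \<phi> ` P)"
    using assms(1) linear_resp_vector
    by (intro compact_continuous_image linear_continuous_on) (simp_all flip: linear_conv_bounded_linear)
  have convex: "convex (resp_vector \<phi> ` P)"
    using assms(2) linear_resp_vector by (rule convex_linear_image[rotated])
  have "robust \<phi> P \<longleftrightarrow>
      (\<exists>w :: 'n \<Rightarrow> real. (\<forall>i. w i \<ge> 0) \<and> (\<exists>i. w i \<noteq> 0) \<and>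
        (\<forall>p\<in>P. 1/2 * (\<Sum>i\<in>UNIV. w i) < (\<Sum>i\<in>UNIV. w i * resp \<phi> p i)))"
    using ex_component_gt_iff_weighted_sum_gt[OF compact convex, of "1/2"]
    by (simp add: robust_def resp_vector_def)
  also have "\<dots> \<longleftrightarrow>
      (\<exists>w :: 'n \<Rightarrow> real. (\<forall>i. w i \<ge> 0) \<and> (\<exists>i. w i \<noteq> 0) \<and>
        (\<forall>p. p extreme_point_of P \<longrightarrow>
          (\<Sum>i\<in>UNIV. w i * resp \<phi> p i) / (\<Sum>i\<in>UNIV. w i) > 1/2))"
  proof (intro ex_cong1 conj_cong refl)
    fix w :: "'n \<Rightarrow> real"
    assume "\<forall>i. w i \<ge> 0" and "\<exists>i. w i \<noteq> 0"
    then have "0 < (\<Sum>i\<in>UNIV. w i)"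
      by (rule ex_nonzero_imp_sum_pos)
    then show "(\<forall>p\<in>P. 1/2 * (\<Sum>i\<in>UNIV. w i) < (\<Sum>i\<in>UNIV. w i * resp \<phi> p i)) \<longleftrightarrow>
        (\<forall>p. p extreme_point_of P \<longrightarrow>
          (\<Sum>i\<in>UNIV. w i * resp \<phi> p i) / (\<Sum>i\<in>UNIV. w i) > 1/2)"
      using ball_extreme_points_iff_linear[OF assms linear_weighted_resp,
          of "{1/2 * (\<Sum>i\<in>UNIV. w i)<..}"]
      by (simp add: pos_less_divide_eq mult.commute)
  qed
  finally show ?thesis .
qed

lemma weakly_robust_iff_weighted_resp_on_extreme_points:
  fixes P :: "(real ^ ('n::finite \<Rightarrow> vote)) set"
  assumes "compact P" and "convex P"
  shows "weakly_robust \<phi> P \<longleftrightarrow>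
    (\<exists>w :: 'n \<Rightarrow> real. (\<forall>i. w i \<ge> 0) \<and> (\<exists>i. w i \<noteq> 0) \<and>
      (\<forall>p. p extreme_point_of P \<longrightarrow>
        (\<Sum>i\<in>UNIV. w i * resp \<phi> p i) / (\<Sum>i\<in>UNIV. w i) \<ge> 1/2))"
proof -
  have convex: "convex (resp_vector \<phi> ` P)"
    using assms(2) linear_resp_vector by (rule convex_linear_image[rotated])
  have "weakly_robust \<phi> P \<longleftrightarrow>
      (\<exists>w :: 'n \<Rightarrow> real. (\<forall>i. w i \<ge> 0) \<and> (\<exists>i. w i \<noteq> 0) \<and>
        (\<forall>p\<in>P. 1/2 * (\<Sum>i\<in>UNIV. w i) \<le> (\<Sum>i\<in>UNIV. w i * resp \<phi> p i)))"
    using ex_component_ge_iff_weighted_sum_ge[OF convex, of "1/2"]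
    by (simp add: weakly_robust_def resp_vector_def)
  also have "\<dots> \<longleftrightarrow>
      (\<exists>w :: 'n \<Rightarrow> real. (\<forall>i. w i \<ge> 0) \<and> (\<exists>i. w i \<noteq> 0) \<and>
        (\<forall>p. p extreme_point_of P \<longrightarrow>
          (\<Sum>i\<in>UNIV. w i * resp \<phi> p i) / (\<Sum>i\<in>UNIV. w i) \<ge> 1/2))"
  proof (intro ex_cong1 conj_cong refl)
    fix w :: "'n \<Rightarrow> real"
    assume "\<forall>i. w i \<ge> 0" and "\<exists>i. w i \<noteq> 0"
    then have "0 < (\<Sum>i\<in>UNIV. w i)"
      by (rule ex_nonzero_imp_sum_pos)
    then show "(\<forall>p\<in>P. 1/2 * (\<Sum>i\<in>UNIV. w i) \<le> (\<Sum>i\<in>UNIV. w i * resp \<phi> p i)) \<longleftrightarrow>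
        (\<forall>p. p extreme_point_of P \<longrightarrow>
          (\<Sum>i\<in>UNIV. w i * resp \<phi> p i) / (\<Sum>i\<in>UNIV. w i) \<ge> 1/2)"
      using ball_extreme_points_iff_linear[OF assms linear_weighted_resp,
          of "{1/2 * (\<Sum>i\<in>UNIV. w i)..}"]
      by (simp add: pos_le_divide_eq mult.commute)
  qed
  finally show ?thesis .
qed

theorem corollary4:
  fixes P :: "(real ^ ('n::finite \<Rightarrow> vote)) set"
  assumes "closed P" and "convex P" and "P \<subseteq> prob_simplex"
  shows "(\<forall>\<phi>. robust \<phi> P \<longleftrightarrow>
            (\<exists>w :: 'n \<Rightarrow> real. (\<forall>i. w i \<ge> 0) \<and> (\<exists>i. w i \<noteq> 0) \<and>
               (\<forall>p. p extreme_point_of P \<longrightarrow>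
                  (\<Sum>i\<in>UNIV. w i * resp \<phi> p i) / (\<Sum>i\<in>UNIV. w i) > 1/2)))
       \<and> (\<forall>\<phi>. weakly_robust \<phi> P \<longleftrightarrow>
            (\<exists>w :: 'n \<Rightarrow> real. (\<forall>i. w i \<ge> 0) \<and> (\<exists>i. w i \<noteq> 0) \<and>
               (\<forall>p. p extreme_point_of P \<longrightarrow>
                  (\<Sum>i\<in>UNIV. w i * resp \<phi> p i) / (\<Sum>i\<in>UNIV. w i) \<ge> 1/2)))"
proof -
  have "compact P"
    using assms(1,3) bounded_prob_simplex bounded_subset by (auto simp: compact_eq_bounded_closed)
  with assms(2) show ?thesis
    by (simp only: robust_iff_weighted_resp_on_extreme_points
        weakly_robust_iff_weighted_resp_on_extreme_points simp_thms)
qed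

end
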